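(* Let $r\geq 1$, let $\mathbf a=(a_1,\ldots,a_r)$ be positive integers, let $D$ be a positive common multiple of $a_1,\ldots,a_r$, and let $\sigma=a_1+\cdots+a_r$. For an integer $n\geq 0$ put $j=\lceil \frac{n+\sigma}{D}\rceil - r$ and $k= \lfloor \frac{n}{D}\rfloor - \lceil \frac{n+\sigma}{D} \rceil + r$. Then $$ (r-1)!\,p_{\mathbf a}(n) \equiv 0 \pmod{ (j+k+1)(j+k+2)\cdots (j+r-1)}, $$ where an empty product equals $1$.
   Context: $p_{\mathbf a}(n)$ is the number of integer solutions $(x_1,\ldots,x_r)$ of $a_1x_1+\cdots+a_rx_r=n$ with all $x_i\geq 0$. *)

theory Defs
  imports Complex_Main "HOL-Number_Theory.Cong"
begin

definition p_count :: "nat list \<Rightarrow> nat \<Rightarrow> nat" where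
  "p_count a n = card {x :: nat list. length x = length a \<and>
      (\<Sum>i<length a. a ! i * x ! i) = n}"

end

theory Submission
  imports Defs
begin

text \<open>Put \<open>c\<^sub>i = D / a\<^sub>i\<close> and split every solution as \<open>x\<^sub>i = c\<^sub>i q\<^sub>i + s\<^sub>i\<close> with
  \<open>0 \<le> s\<^sub>i < c\<^sub>i\<close>. Then \<open>n = D (q\<^sub>1 + \<dots> + q\<^sub>r) + \<Sum> a\<^sub>i s\<^sub>i\<close>, so the solutions with a fixed
  residue vector \<open>s\<close> correspond to the compositions of a fixed \<open>N\<close> into \<open>r\<close> parts; there are
  \<open>C(N + r - 1, r - 1)\<close> of them, and \<open>(r - 1)!\<close> times this number is \<open>(N + 1) \<cdots> (N + r - 1)\<close>.
  Since \<open>0 \<le> \<Sum> a\<^sub>i s\<^sub>i \<le> r D - \<sigma>\<close>, every such \<open>N\<close> lies between \<open>j\<close> and \<open>j + k\<close>, so the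
  product in the statement divides each of these terms.\<close>

definition solutions :: "nat list \<Rightarrow> nat \<Rightarrow> nat list set" where
  "solutions a n = {x. length x = length a \<and> (\<Sum>i<length a. a ! i * x ! i) = n}"

definition mod_vector :: "(nat \<Rightarrow> nat) \<Rightarrow> nat list \<Rightarrow> nat list" where
  "mod_vector c x = map (\<lambda>i. x ! i mod c i) [0..<length x]"

definition div_vector :: "(nat \<Rightarrow> nat) \<Rightarrow> nat list \<Rightarrow> nat list" where
  "div_vector c x = map (\<lambda>i. x ! i div c i) [0..<length x]"

lemma p_count_eq_card_solutions: "p_count a n = card (solutions a n)"
  by (simp add: p_count_def solutions_def)

lemma finite_solutions:
  assumes "\<forall>ai\<in>set a. ai > 0"
  shows "finite (solutions a n)"
proof (rule finite_subset)
  show "finite {x. set x \<subseteq> {..n} \<and> length x = length a}"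
    by (rule finite_lists_length_eq) simp
  show "solutions a n \<subseteq> {x. set x \<subseteq> {..n} \<and> length x = length a}"
  proof (clarsimp simp: solutions_def in_set_conv_nth)
    fix x :: "nat list" and i assume "i < length a"
    then have "a ! i > 0" using assms by (simp add: nth_mem)
    then have "x ! i \<le> a ! i * x ! i" by simp
    also have "\<dots> \<le> (\<Sum>i<length a. a ! i * x ! i)"
      by (rule member_le_sum) (use \<open>i < length a\<close> in auto)
    finally show "x ! i \<le> (\<Sum>i<length a. a ! i * x ! i)" .
  qed
qed

lemma fact_times_binomial_eq_prod:
  "fact m * int ((N + m) choose m) = (\<Prod>i\<in>{int N + 1..int N + int m}. i)"
proof (induction m)
  case 0
  then show ?case by simp
next
  case (Suc m)
  have step: "int ((N + Suc m) choose Suc m) * (int m + 1) = (int N + int m + 1) * int ((N + m) choose m)"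
    using arg_cong[OF Suc_times_binomial_eq[of "N + m" m], of int] by (simp add: algebra_simps)
  have "{int N + 1..int N + int (Suc m)} = insert (int N + int m + 1) {int N + 1..int N + int m}"
    by auto
  then have "(\<Prod>i\<in>{int N + 1..int N + int (Suc m)}. i) = (int N + int m + 1) * (\<Prod>i\<in>{int N + 1..int N + int m}. i)"
    by simp
  also have "\<dots> = (int N + int m + 1) * (fact m * int ((N + m) choose m))"
    by (simp only: Suc.IH)
  also have "\<dots> = fact m * (int ((N + Suc m) choose Suc m) * (int m + 1))"
    using step by (simp add: algebra_simps)
  also have "\<dots> = fact (Suc m) * int ((N + Suc m) choose Suc m)"
    by (simp add: fact_Suc algebra_simps)
  finally show ?case ..
qed

lemma card_compositions:
  assumes "r \<ge> 1"
  shows "card {y :: nat list. length y = r \<and> sum_list y = N} = (N + (r - 1)) choose (r - 1)"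
  using card_length_sum_list[of r N] binomial_symmetric[of N "N + (r - 1)"] assms
  by (simp add: add_diff_assoc)

lemma weighted_sum_div_mod:
  assumes period: "\<And>i. i < length a \<Longrightarrow> a ! i * c i = D" and "length x = length a"
  shows "(\<Sum>i<length a. a ! i * x ! i)
    = D * sum_list (div_vector c x) + (\<Sum>i<length a. a ! i * mod_vector c x ! i)"
proof -
  have "a ! i * x ! i = D * (x ! i div c i) + a ! i * (x ! i mod c i)" if "i < length a" for i
    by (metis period[OF that] div_mult_mod_eq distrib_left mult.assoc mult.commute)
  then show ?thesis
    using assms(2) by (simp add: div_vector_def mod_vector_def sum_list_sum_nth atLeast0LessThan
        sum.distrib sum_distrib_left)
qed

lemma bij_betw_compositions_residue_class:
  assumes period: "\<And>i. i < length a \<Longrightarrow> a ! i * c i = D" and "D > 0"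
    and len: "length z = length a" and small: "\<And>i. i < length a \<Longrightarrow> z ! i < c i"
  defines "w \<equiv> \<Sum>i<length a. a ! i * z ! i"
  shows "bij_betw (\<lambda>y. map (\<lambda>i. c i * y ! i + z ! i) [0..<length a])
    {y. length y = length a \<and> sum_list y = N} {x \<in> solutions a (D * N + w). mod_vector c x = z}"
proof (rule bij_betw_byWitness[where f' = "div_vector c"])
  let ?e = "\<lambda>y. map (\<lambda>i. c i * y ! i + z ! i) [0..<length a]"
  have c_pos: "c i > 0" if "i < length a" for i
    using small[OF that] by simp
  have div_e: "div_vector c (?e y) = y" and mod_e: "mod_vector c (?e y) = z"
    if "length y = length a" for y
    using that len small c_pos by (auto intro!: nth_equalityI simp: div_vector_def mod_vector_def)
  have sum_e: "(\<Sum>i<length a. a ! i * ?e y ! i) = D * sum_list y + w" if "length y = length a" for y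
    using weighted_sum_div_mod[OF period, of "?e y"] that div_e[OF that] mod_e[OF that]
    by (simp add: w_def)
  show "\<forall>y\<in>{y. length y = length a \<and> sum_list y = N}. div_vector c (?e y) = y"
    using div_e by blast
  show "?e ` {y. length y = length a \<and> sum_list y = N} \<subseteq> {x \<in> solutions a (D * N + w). mod_vector c x = z}"
    using sum_e mod_e by (auto simp: solutions_def)
  show "\<forall>x\<in>{x \<in> solutions a (D * N + w). mod_vector c x = z}. ?e (div_vector c x) = x"
    by (auto intro!: nth_equalityI simp: solutions_def div_vector_def mod_vector_def)
  show "div_vector c ` {x \<in> solutions a (D * N + w). mod_vector c x = z}
    \<subseteq> {y. length y = length a \<and> sum_list y = N}"
  proof clarify
    fix x assume "x \<in> solutions a (D * N + w)" and "z = mod_vector c x"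
    then have "D * sum_list (div_vector c x) + w = D * N + w" and "length x = length a"
      using weighted_sum_div_mod[OF period] by (auto simp: solutions_def w_def)
    then show "length (div_vector c x) = length a \<and> sum_list (div_vector c x) = N"
      using \<open>D > 0\<close> by (simp add: div_vector_def)
  qed
qed

lemma residue_weight_bound:
  assumes period: "\<And>i. i < length a \<Longrightarrow> a ! i * c i = D"
    and "length z = length a" and small: "\<And>i. i < length a \<Longrightarrow> z ! i < c i"
  shows "(\<Sum>i<length a. a ! i * z ! i) + sum_list a \<le> length a * D"
proof -
  have "(\<Sum>i<length a. a ! i * z ! i) + sum_list a = (\<Sum>i<length a. a ! i * (z ! i + 1))"
    by (simp add: sum_list_sum_nth atLeast0LessThan sum.distrib)
  also have "\<dots> \<le> (\<Sum>i<length a. D)"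
    by (rule sum_mono) (metis period small lessThan_iff Suc_eq_plus1 Suc_leI mult_le_mono2)
  finally show ?thesis by simp
qed

lemma quotient_bounds:
  fixes D N w s r :: nat
  assumes "D > 0" and "w + s \<le> r * D"
  shows "\<lceil>(real (D * N + w) + real s) / real D\<rceil> - int r \<le> int N"
    and "int N \<le> \<lfloor>real (D * N + w) / real D\<rfloor>"
proof -
  have "real (D * N + w) + real s \<le> real D * real (N + r)"
    using assms(2) by (simp only: of_nat_add [symmetric] of_nat_mult [symmetric] of_nat_le_iff)
      (simp add: algebra_simps)
  then have "(real (D * N + w) + real s) / real D \<le> of_int (int N + int r)"
    using assms(1) by (simp add: divide_le_eq mult.commute)
  then show "\<lceil>(real (D * N + w) + real s) / real D\<rceil> - int r \<le> int N"
    using ceiling_le by fastforce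
  have "real N \<le> real (D * N + w) / real D"
    using assms(1) by (simp add: le_divide_eq mult.commute)
  then show "int N \<le> \<lfloor>real (D * N + w) / real D\<rfloor>"
    by (simp add: le_floor_iff)
qed

lemma solution_div_mod_split:
  assumes period: "\<And>i. i < length a \<Longrightarrow> a ! i * c i = D" and "D > 0"
    and x0: "x0 \<in> solutions a n"
  shows "length (mod_vector c x0) = length a"
    and "\<And>i. i < length a \<Longrightarrow> mod_vector c x0 ! i < c i"
    and "n = D * sum_list (div_vector c x0) + (\<Sum>i<length a. a ! i * mod_vector c x0 ! i)"
proof -
  have "c i > 0" if "i < length a" for i
    using period[OF that] \<open>D > 0\<close> by (metis gr0I mult_0_right)
  then show "length (mod_vector c x0) = length a"
    and "\<And>i. i < length a \<Longrightarrow> mod_vector c x0 ! i < c i"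
    using x0 by (auto simp: solutions_def mod_vector_def)
  show "n = D * sum_list (div_vector c x0) + (\<Sum>i<length a. a ! i * mod_vector c x0 ! i)"
    using x0 weighted_sum_div_mod[OF period] by (auto simp: solutions_def)
qed

lemma card_residue_class:
  assumes period: "\<And>i. i < length a \<Longrightarrow> a ! i * c i = D" and "D > 0"
    and "length a \<ge> 1" and x0: "x0 \<in> solutions a n"
  shows "card {x \<in> solutions a n. mod_vector c x = mod_vector c x0}
    = (sum_list (div_vector c x0) + (length a - 1)) choose (length a - 1)"
  using bij_betw_same_card[OF bij_betw_compositions_residue_class[OF period \<open>D > 0\<close>
        solution_div_mod_split(1,2)[OF period \<open>D > 0\<close> x0]]]
    card_compositions[OF \<open>length a \<ge> 1\<close>] solution_div_mod_split(3)[OF period \<open>D > 0\<close> x0]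
  by simp

lemma quotient_sum_bounds:
  assumes period: "\<And>i. i < length a \<Longrightarrow> a ! i * c i = D" and "D > 0"
    and x0: "x0 \<in> solutions a n"
  shows "\<lceil>(real n + real (sum_list a)) / real D\<rceil> - int (length a) \<le> int (sum_list (div_vector c x0))"
    and "int (sum_list (div_vector c x0)) \<le> \<lfloor>real n / real D\<rfloor>"
  using quotient_bounds[OF \<open>D > 0\<close> residue_weight_bound[OF period
        solution_div_mod_split(1,2)[OF period \<open>D > 0\<close> x0]]]
    solution_div_mod_split(3)[OF period \<open>D > 0\<close> x0]
  by simp_all

lemma card_eq_sum_card_fibres:
  assumes "finite A"
  shows "card A = (\<Sum>y\<in>f ` A. card {x \<in> A. f x = y})"
  using sum.image_gen[OF assms, where h = "\<lambda>_. 1 :: nat" and g = f]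
  by (simp only: card_eq_sum[symmetric])

lemma prod_shifted_interval_dvd:
  fixes j k N m :: int
  assumes "j \<le> N" and "N \<le> j + k"
  shows "(\<Prod>i\<in>{j + k + 1..j + m}. i) dvd (\<Prod>i\<in>{N + 1..N + m}. i)"
  by (rule prod_dvd_prod_subset) (use assms in auto)

theorem corollary2p4:
  fixes a :: "nat list" and D n :: nat
  assumes "length a \<ge> 1"
    and "\<forall>ai\<in>set a. ai > 0"
    and "D > 0"
    and "\<forall>ai\<in>set a. ai dvd D"
  defines "r \<equiv> length a"
    and "\<sigma> \<equiv> sum_list a"
  defines "j \<equiv> \<lceil>(real n + real \<sigma>) / real D\<rceil> - int r"
    and "k \<equiv> \<lfloor>real n / real D\<rfloor> - \<lceil>(real n + real \<sigma>) / real D\<rceil> + int r"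
  shows "[fact (r - 1) * int (p_count a n) = 0] (mod (\<Prod>i\<in>{j+k+1..j + int r - 1}. i))"
proof -
  define c where "c i = D div a ! i" for i
  have period: "a ! i * c i = D" if "i < length a" for i
    using assms(4) that by (simp add: c_def nth_mem)
  define P where "P = (\<Prod>i\<in>{j + k + 1..j + int (r - 1)}. i)"
  have class_dvd: "P dvd fact (r - 1) * int (card {x \<in> solutions a n. mod_vector c x = mod_vector c x0})"
    if "x0 \<in> solutions a n" for x0
  proof -
    define N where "N = sum_list (div_vector c x0)"
    have "j \<le> int N" and "int N \<le> j + k"
      using quotient_sum_bounds[OF period \<open>D > 0\<close> that] by (simp_all add: j_def k_def \<sigma>_def r_def N_def)
    then show ?thesis
      using card_residue_class[OF period \<open>D > 0\<close> assms(1) that] prod_shifted_interval_dvd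
        fact_times_binomial_eq_prod[of "r - 1" N]
      by (simp add: P_def N_def r_def)
  qed
  have "fact (r - 1) * int (p_count a n)
      = (\<Sum>z\<in>mod_vector c ` solutions a n. fact (r - 1) * int (card {x \<in> solutions a n. mod_vector c x = z}))"
    using card_eq_sum_card_fibres[OF finite_solutions[OF assms(2)], where f = "mod_vector c"]
    by (simp add: p_count_eq_card_solutions sum_distrib_left)
  then have "P dvd fact (r - 1) * int (p_count a n)"
    using class_dvd by (auto intro: dvd_sum)
  then show ?thesis
    using assms(1) by (simp add: P_def r_def cong_0_iff of_nat_diff add_diff_eq)
qed

end
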